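(* If $L \subseteq a^*$ is a regular language over a one-letter alphabet, then $\mathbb{OGI}^*(L)$ is regular.
   Context: Outfix-guided insertion: $x \leftarrow y = \{ x_1 u z v x_2 \mid x = x_1 u v x_2,\ y = u z v,\ u \neq \varepsilon,\ v \neq \varepsilon \}$, extended to languages by union over all pairs. $\mathbb{OGI}^{(0)}(L) = L$, $\mathbb{OGI}^{(i+1)}(L) = \mathbb{OGI}^{(i)}(L) \leftarrow \mathbb{OGI}^{(i)}(L)$, and $\mathbb{OGI}^*(L) = \bigcup_{i \geq 0} \mathbb{OGI}^{(i)}(L)$. *)

theory Defs
  imports Main
begin

datatype 'a rexp = Zero | One | Atom 'a | Plus "'a rexp" "'a rexp"
  | Times "'a rexp" "'a rexp" | Star "'a rexp"

definition conc :: "'a list set \<Rightarrow> 'a list set \<Rightarrow> 'a list set" where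
  "conc A B = {u @ v | u v. u \<in> A \<and> v \<in> B}"

definition kstar :: "'a list set \<Rightarrow> 'a list set" where
  "kstar A = {concat ws | ws. set ws \<subseteq> A}"

fun lang :: "'a rexp \<Rightarrow> 'a list set" where
  "lang Zero = {}"
| "lang One = {[]}"
| "lang (Atom c) = {[c]}"
| "lang (Plus r s) = lang r \<union> lang s"
| "lang (Times r s) = conc (lang r) (lang s)"
| "lang (Star r) = kstar (lang r)"

definition regular :: "'a list set \<Rightarrow> bool" where
  "regular L \<longleftrightarrow> (\<exists>r. lang r = L)"

definition ogi_word :: "'a list \<Rightarrow> 'a list \<Rightarrow> 'a list set" where
  "ogi_word x y = {x1 @ u @ z @ v @ x2 | x1 u z v x2.
      x = x1 @ u @ v @ x2 \<and> y = u @ z @ v \<and> u \<noteq> [] \<and> v \<noteq> []}"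

definition ogi :: "'a list set \<Rightarrow> 'a list set \<Rightarrow> 'a list set" where
  "ogi L1 L2 = (\<Union>x\<in>L1. \<Union>y\<in>L2. ogi_word x y)"

fun ogi_iter :: "nat \<Rightarrow> 'a list set \<Rightarrow> 'a list set" where
  "ogi_iter 0 L = L"
| "ogi_iter (Suc i) L = ogi (ogi_iter i L) (ogi_iter i L)"

definition ogi_star :: "'a list set \<Rightarrow> 'a list set" where
  "ogi_star L = (\<Union>i. ogi_iter i L)"

end

theory Submission
  imports Defs
begin

text \<open>Over a one-letter alphabet a word is determined by its length, and inserting a^q into a^p
  guided by an outfix of total length k yields exactly the words a^(p+q-k) with 2 \<le> k \<le> min p q.
  Taking q = p and k = p - 1 shows that every word of length p \<ge> 3 produces a^(p+1), so the
  iteration eventually contains every word at least as long as some word of L of length \<ge> 3.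
  Conversely p + q - k \<ge> max p q, and words of length < 3 only combine as a^2 \<leftarrow> a^2 = {a^2}.
  Hence OGI*(L) is L together with an upward closed set of unary words, and both are regular.\<close>

lemma replicate_length_if_in_lists_singleton:
  "w \<in> lists {a} \<Longrightarrow> replicate (length w) a = w"
  by (metis empty_iff in_listsD insert_iff replicate_length_same)

lemma ogi_word_replicate:
  "ogi_word (replicate p a) (replicate q a) =
     {replicate (p + q - k) a | k. 2 \<le> k \<and> k \<le> p \<and> k \<le> q}"
proof (intro set_eqI iffI)
  fix w assume "w \<in> ogi_word (replicate p a) (replicate q a)"
  then obtain x1 u z v x2 where
    w: "w = x1 @ u @ z @ v @ x2" and
    x: "replicate p a = x1 @ u @ v @ x2" and
    y: "replicate q a = u @ z @ v" and
    "u \<noteq> []" "v \<noteq> []"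
    unfolding ogi_word_def by blast
  have p: "p = length x1 + length u + length v + length x2"
    and q: "q = length u + length z + length v"
    using arg_cong[OF x, of length] arg_cong[OF y, of length] by simp_all
  have k: "2 \<le> length u + length v" "length u + length v \<le> p" "length u + length v \<le> q"
    using p q \<open>u \<noteq> []\<close> \<open>v \<noteq> []\<close> by (simp_all add: Suc_le_eq flip: length_greater_0_conv)
  have "replicate p a \<in> lists {a}" "replicate q a \<in> lists {a}"
    by auto
  then have "replicate (length w) a = w"
    unfolding x y w by (intro replicate_length_if_in_lists_singleton) simp
  moreover have "length w = p + q - (length u + length v)"
    using p q w by simp
  ultimately have "w = replicate (p + q - (length u + length v)) a"
    by simp
  with k show "w \<in> {replicate (p + q - k) a | k. 2 \<le> k \<and> k \<le> p \<and> k \<le> q}"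
    by blast
next
  fix w assume "w \<in> {replicate (p + q - k) a | k. 2 \<le> k \<and> k \<le> p \<and> k \<le> q}"
  then obtain k where k: "2 \<le> k" "k \<le> p" "k \<le> q" and w: "w = replicate (p + q - k) a"
    by blast
  let ?u = "[a]" and ?z = "replicate (q - k) a" and ?v = "replicate (k - 1) a"
    and ?x2 = "replicate (p - k) a"
  have "replicate p a = [] @ ?u @ ?v @ ?x2" "replicate q a = ?u @ ?z @ ?v"
    "w = [] @ ?u @ ?z @ ?v @ ?x2" "?v \<noteq> []"
    using k w by (simp_all flip: replicate_add replicate_Suc)
  then show "w \<in> ogi_word (replicate p a) (replicate q a)"
    unfolding ogi_word_def by (intro CollectI exI) (intro conjI, assumption+, simp)
qed

lemma ogi_word_replicate_Suc:
  "3 \<le> p \<Longrightarrow> replicate (Suc p) a \<in> ogi_word (replicate p a) (replicate p a)"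
proof -
  assume "3 \<le> p"
  then have "Suc p = p + p - (p - 1)" "2 \<le> p - 1" "p - 1 \<le> p"
    by simp_all
  then show ?thesis
    unfolding ogi_word_replicate by (metis (mono_tags, lifting) mem_Collect_eq)
qed

lemma subset_lists_singleton_eq_image:
  "A \<subseteq> lists {a} \<Longrightarrow> A = (\<lambda>n. replicate n a) ` {n. replicate n a \<in> A}"
proof (intro equalityI subsetI)
  fix w assume "w \<in> A"
  moreover assume "A \<subseteq> lists {a}"
  ultimately have "replicate (length w) a = w"
    by (blast intro: replicate_length_if_in_lists_singleton)
  with \<open>w \<in> A\<close> show "w \<in> (\<lambda>n. replicate n a) ` {n. replicate n a \<in> A}"
    by (metis (mono_tags, lifting) image_eqI mem_Collect_eq)
qed auto

lemma ogi_lists_singleton: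
  assumes "A \<subseteq> lists {a}" "B \<subseteq> lists {a}"
  shows "ogi A B = {replicate (p + q - k) a | p q k.
    replicate p a \<in> A \<and> replicate q a \<in> B \<and> 2 \<le> k \<and> k \<le> p \<and> k \<le> q}"
proof -
  define P where "P = {p. replicate p a \<in> A}"
  define Q where "Q = {q. replicate q a \<in> B}"
  have "A = (\<lambda>n. replicate n a) ` P" "B = (\<lambda>n. replicate n a) ` Q"
    unfolding P_def Q_def using assms by (simp_all flip: subset_lists_singleton_eq_image)
  then have "ogi A B = (\<Union>p\<in>P. \<Union>q\<in>Q. ogi_word (replicate p a) (replicate q a))"
    unfolding ogi_def by simp
  also have "\<dots> = {replicate (p + q - k) a | p q k. p \<in> P \<and> q \<in> Q \<and> 2 \<le> k \<and> k \<le> p \<and> k \<le> q}"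
    unfolding ogi_word_replicate by blast
  finally show ?thesis
    unfolding P_def Q_def by simp
qed

lemma ogi_iter_lists_singleton:
  "L \<subseteq> lists {a} \<Longrightarrow> ogi_iter i L \<subseteq> lists {a}"
  by (induction i) (auto simp: ogi_lists_singleton)

lemma ogi_iter_subset_ogi_star: "ogi_iter i L \<subseteq> ogi_star L"
  unfolding ogi_star_def by blast

lemma replicate_add_in_ogi_iter:
  assumes "3 \<le> p" "replicate p a \<in> L"
  shows "replicate (p + j) a \<in> ogi_iter j L"
proof (induction j)
  case 0
  show ?case using assms(2) by simp
next
  case (Suc j)
  then have "replicate (Suc (p + j)) a \<in> ogi (ogi_iter j L) (ogi_iter j L)"
    using ogi_word_replicate_Suc[of "p + j" a] assms(1) unfolding ogi_def by fastforce
  then show ?case by simp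
qed

definition pumped_lengths :: "'a list set \<Rightarrow> 'a \<Rightarrow> nat set" where
  "pumped_lengths L a = {n. \<exists>p. 3 \<le> p \<and> p \<le> n \<and> replicate p a \<in> L}"

lemma pumped_lengths_upward_closed:
  "n \<in> pumped_lengths L a \<Longrightarrow> n \<le> n' \<Longrightarrow> n' \<in> pumped_lengths L a"
  unfolding pumped_lengths_def by (blast intro: order_trans)

lemma replicate_in_image_replicate_iff [simp]:
  "replicate n a \<in> (\<lambda>n. replicate n a) ` N \<longleftrightarrow> n \<in> N"
  by (auto simp: replicate_eq_replicate)

lemma ogi_iter_subset_Un_pumped:
  assumes "L \<subseteq> lists {a}"
  shows "ogi_iter i L \<subseteq> L \<union> (\<lambda>n. replicate n a) ` pumped_lengths L a"
proof (induction i)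
  case 0
  show ?case by simp
next
  case (Suc i)
  let ?N = "pumped_lengths L a"
  show ?case
  proof
    fix w assume "w \<in> ogi_iter (Suc i) L"
    then obtain p q k where "replicate p a \<in> ogi_iter i L" "replicate q a \<in> ogi_iter i L"
      and k: "2 \<le> k" "k \<le> p" "k \<le> q" and w: "w = replicate (p + q - k) a"
      using ogi_lists_singleton[OF ogi_iter_lists_singleton[OF assms] ogi_iter_lists_singleton[OF assms]]
      by auto
    with Suc.IH have pq: "replicate p a \<in> L \<or> p \<in> ?N" "replicate q a \<in> L \<or> q \<in> ?N"
      by auto
    show "w \<in> L \<union> (\<lambda>n. replicate n a) ` ?N"
    proof (cases "p \<in> ?N \<or> q \<in> ?N")
      case True
      moreover have "p \<le> p + q - k" "q \<le> p + q - k"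
        using k by simp_all
      ultimately have "p + q - k \<in> ?N"
        using pumped_lengths_upward_closed[of p L a "p + q - k"]
          pumped_lengths_upward_closed[of q L a "p + q - k"]
        by blast
      then show ?thesis
        using w by simp
    next
      case False
      with pq have "replicate p a \<in> L" "replicate q a \<in> L"
        by auto
      moreover from this False have "p < 3" "q < 3"
        unfolding pumped_lengths_def by auto
      with k have "p + q - k = p"
        by simp
      ultimately show ?thesis
        using w by simp
    qed
  qed
qed

lemma ogi_star_lists_singleton:
  assumes "L \<subseteq> lists {a}"
  shows "ogi_star L = L \<union> (\<lambda>n. replicate n a) ` pumped_lengths L a"
proof
  show "ogi_star L \<subseteq> L \<union> (\<lambda>n. replicate n a) ` pumped_lengths L a"
    unfolding ogi_star_def using ogi_iter_subset_Un_pumped[OF assms] by blast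
  have "replicate n a \<in> ogi_star L" if "n \<in> pumped_lengths L a" for n
  proof -
    from that obtain p where p: "3 \<le> p" "replicate p a \<in> L" and "p \<le> n"
      unfolding pumped_lengths_def by blast
    from p have "replicate (p + (n - p)) a \<in> ogi_iter (n - p) L"
      by (rule replicate_add_in_ogi_iter)
    with \<open>p \<le> n\<close> have "replicate n a \<in> ogi_iter (n - p) L"
      by simp
    then show ?thesis
      using ogi_iter_subset_ogi_star by blast
  qed
  moreover have "L \<subseteq> ogi_star L"
    using ogi_iter_subset_ogi_star[of 0 L] by simp
  ultimately show "L \<union> (\<lambda>n. replicate n a) ` pumped_lengths L a \<subseteq> ogi_star L"
    by blast
qed

fun word_rexp :: "'a list \<Rightarrow> 'a rexp" where
  "word_rexp [] = One"
| "word_rexp (c # w) = Times (Atom c) (word_rexp w)"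

lemma lang_word_rexp [simp]: "lang (word_rexp w) = {w}"
  by (induction w) (auto simp: conc_def)

lemma lang_Star_Atom: "lang (Star (Atom a)) = range (\<lambda>n. replicate n a)"
proof (intro equalityI subsetI)
  fix w assume "w \<in> lang (Star (Atom a))"
  then obtain ws where "w = concat ws" "set ws \<subseteq> {[a]}"
    by (auto simp: kstar_def)
  then have "w = replicate (length ws) a"
    by (induction ws arbitrary: w) auto
  then show "w \<in> range (\<lambda>n. replicate n a)"
    by blast
next
  fix w assume "w \<in> range (\<lambda>n. replicate n a)"
  then obtain n where "w = replicate n a"
    by blast
  then have "w = concat (replicate n [a])" "set (replicate n [a]) \<subseteq> {[a]}"
    by (induction n arbitrary: w) auto
  then show "w \<in> lang (Star (Atom a))"
    unfolding lang.simps kstar_def by blast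
qed

lemma regular_Un: "regular A \<Longrightarrow> regular B \<Longrightarrow> regular (A \<union> B)"
  unfolding regular_def by (metis lang.simps(4))

lemma regular_replicate_atLeast: "regular ((\<lambda>n. replicate n a) ` {m..})"
proof -
  have "{m..} = plus m ` UNIV"
    using image_add_atLeast[of m 0] by simp
  then have "(\<lambda>n. replicate n a) ` {m..} = (\<lambda>k. replicate m a @ replicate k a) ` UNIV"
    by (simp add: image_image replicate_add)
  also have "\<dots> = lang (Times (word_rexp (replicate m a)) (Star (Atom a)))"
    unfolding lang.simps(5) lang_word_rexp lang_Star_Atom conc_def by blast
  finally show ?thesis
    unfolding regular_def by blast
qed

lemma regular_replicate_upward_closed:
  assumes "\<And>n n'. n \<in> N \<Longrightarrow> n \<le> n' \<Longrightarrow> n' \<in> N"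
  shows "regular ((\<lambda>n. replicate n a) ` N)"
proof (cases "N = {}")
  case True
  then show ?thesis
    unfolding regular_def by (metis lang.simps(1) image_empty)
next
  case False
  define m where "m = (LEAST n. n \<in> N)"
  from False obtain n where "n \<in> N"
    by blast
  then have "m \<in> N"
    unfolding m_def by (rule LeastI)
  have "N = {m..}"
  proof (intro set_eqI iffI)
    fix n assume "n \<in> N"
    then show "n \<in> {m..}"
      unfolding m_def by (simp add: Least_le)
  next
    fix n assume "n \<in> {m..}"
    then show "n \<in> N"
      using assms[OF \<open>m \<in> N\<close>] by simp
  qed
  then show ?thesis
    using regular_replicate_atLeast by simp
qed

theorem theorem4p11:
  fixes L :: "'a list set" and a :: 'a
  assumes "L \<subseteq> lists {a}" and "regular L"
  shows "regular (ogi_star L)"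
  unfolding ogi_star_lists_singleton[OF assms(1)]
  using assms(2) pumped_lengths_upward_closed
  by (intro regular_Un regular_replicate_upward_closed)

end
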